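(* Let $G$ be a finite group and let $m\in\mu(G)$. Then $|G|\cdot m^{\phi(m)}$ divides $\det(\mathbf{J}+\mathbf{Q}(\mathcal{P}(G)))$.
   Context: For a finite group $G$, the power graph $\mathcal{P}(G)$ is the simple undirected graph with vertex set $G$, two distinct vertices $x,y$ being adjacent iff $\langle x\rangle\subseteq\langle y\rangle$ or $\langle y\rangle\subseteq\langle x\rangle$. $\mathbf{Q}(\mathcal{P}(G))=\mathbf{\Delta}-\mathbf{A}$ is its Laplacian matrix ($\mathbf{A}$ the adjacency matrix, $\mathbf{\Delta}$ the diagonal matrix of vertex degrees), and $\mathbf{J}$ is the $|G|\times|G|$ all-ones matrix. $\mu(G)$ is the set of element orders of $G$ that are maximal with respect to divisibility among all element orders of $G$. $\phi$ is Euler's totient function. *)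

theory Defs
  imports "HOL-Algebra.Algebra" "HOL-Algebra.Multiplicative_Group"
    "HOL-Combinatorics.Permutations" "HOL-Number_Theory.Totient"
begin

definition det_on :: "'a set \<Rightarrow> ('a \<Rightarrow> 'a \<Rightarrow> int) \<Rightarrow> int" where
  "det_on S M = (\<Sum>p | p permutes S. sign p * (\<Prod>i\<in>S. M i (p i)))"

definition power_adj :: "('a, 'b) monoid_scheme \<Rightarrow> 'a \<Rightarrow> 'a \<Rightarrow> bool" where
  "power_adj G x y \<longleftrightarrow> x \<noteq> y \<and>
     (generate G {x} \<subseteq> generate G {y} \<or> generate G {y} \<subseteq> generate G {x})"

definition power_deg :: "('a, 'b) monoid_scheme \<Rightarrow> 'a \<Rightarrow> nat" where
  "power_deg G x = card {y \<in> carrier G. power_adj G x y}"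

definition power_laplacian :: "('a, 'b) monoid_scheme \<Rightarrow> 'a \<Rightarrow> 'a \<Rightarrow> int" where
  "power_laplacian G x y =
     (if x = y then int (power_deg G x) else - (if power_adj G x y then 1 else 0))"

definition max_orders :: "('a, 'b) monoid_scheme \<Rightarrow> nat set" where
  "max_orders G = {m. (\<exists>x\<in>carrier G. group.ord G x = m) \<and>
       (\<forall>y\<in>carrier G. m dvd group.ord G y \<longrightarrow> group.ord G y = m)}"

end

theory Submission
  imports Defs
begin

(* Let n = |G| and let Q be the Laplacian of the power graph. Q is symmetric with zero row
   sums, so every column of J + Q sums to n; adding all rows to the row of the identity,
   subtracting that row from the others, transposing and repeating the row-sum step gives
   det (J + Q) = n^2 det Q', where Q' is the reduced Laplacian (row and column of the
   identity deleted).
   If x has maximal order m, a neighbour y of x either lies in <x> or satisfies <x> <= <y>,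
   and then <y> = <x> by maximality; so the closed neighbourhood of x is <x>, and
   Q x y = m [y = x] - [y in <x>]. The phi(m) generators of <x> share these properties,
   so their rows in Q' differ pairwise by m times a difference of unit vectors, and
   m^(phi(m) - 1) divides det Q'. Since m divides n, n m^phi(m) divides n^2 m^(phi(m) - 1). *)

lemma det_on_cong:
  assumes "\<And>i j. i \<in> S \<Longrightarrow> j \<in> S \<Longrightarrow> M i j = M' i j"
  shows "det_on S M = det_on S M'"
  unfolding det_on_def
  by (intro sum.cong prod.cong refl arg_cong2[where f = "(*)"])
     (auto simp: assms permutes_in_image)

lemma det_on_fun_upd_row:
  assumes "finite S" "i0 \<in> S"
  shows "det_on S (M(i0 := r)) =
           (\<Sum>p | p permutes S. sign p * (r (p i0) * (\<Prod>i\<in>S - {i0}. M i (p i))))"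
  unfolding det_on_def
proof (intro sum.cong refl arg_cong2[where f = "(*)"])
  fix p
  have "(\<Prod>i\<in>S. (M(i0 := r)) i (p i)) = r (p i0) * (\<Prod>i\<in>S - {i0}. (M(i0 := r)) i (p i))"
    using prod.remove[OF assms, of "\<lambda>i. (M(i0 := r)) i (p i)"] by simp
  also have "(\<Prod>i\<in>S - {i0}. (M(i0 := r)) i (p i)) = (\<Prod>i\<in>S - {i0}. M i (p i))"
    by (intro prod.cong) auto
  finally show "(\<Prod>i\<in>S. (M(i0 := r)) i (p i)) = r (p i0) * (\<Prod>i\<in>S - {i0}. M i (p i))" .
qed

lemma det_on_row_add:
  assumes "finite S" "i0 \<in> S"
  shows "det_on S (M(i0 := (\<lambda>j. a j + b j))) = det_on S (M(i0 := a)) + det_on S (M(i0 := b))"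
  by (simp add: det_on_fun_upd_row[OF assms] distrib_left distrib_right sum.distrib)

lemma det_on_row_scale:
  assumes "finite S" "i0 \<in> S"
  shows "det_on S (M(i0 := (\<lambda>j. c * a j))) = c * det_on S (M(i0 := a))"
  by (simp add: det_on_fun_upd_row[OF assms] sum_distrib_left mult_ac)

lemma det_on_row_sum:
  assumes "finite S" "i0 \<in> S"
  shows "det_on S (M(i0 := (\<lambda>j. \<Sum>k\<in>K. f k j))) = (\<Sum>k\<in>K. det_on S (M(i0 := f k)))"
  by (simp add: det_on_fun_upd_row[OF assms] sum_distrib_left sum_distrib_right sum.swap[of _ K])

lemma det_on_identical_rows:
  assumes S: "finite S" and i: "i0 \<in> S" "i1 \<in> S" "i0 \<noteq> i1" and eq: "M i0 = M i1"
  shows "det_on S M = 0"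
proof -
  let ?t = "transpose i0 i1"
  let ?f = "\<lambda>p. sign p * (\<Prod>i\<in>S. M i (p i))"
  have t: "?t permutes S" by (rule permutes_swap_id[OF i(1,2)])
  have row_swap: "M (?t i) = M i" for i
    using eq by (auto simp: transpose_def)
  have "?f (p \<circ> ?t) = - ?f p" if p: "p permutes S" for p
  proof -
    have "permutation p" "permutation ?t"
      using p t S permutation_permutes by blast+
    then have "sign (p \<circ> ?t) = - sign p"
      using i by (simp add: sign_compose sign_swap_id)
    moreover have "(\<Prod>i\<in>S. M i ((p \<circ> ?t) i)) = (\<Prod>i\<in>S. M i (p i))"
      using prod.permute[OF t, of "\<lambda>i. M i (p (?t i))"] by (simp add: row_swap)
    ultimately show ?thesis by simp
  qed
  then have "det_on S M = (\<Sum>p | p permutes S. - ?f p)"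
    unfolding det_on_def using t
    by (intro sum.reindex_bij_witness[of _ "\<lambda>p. p \<circ> ?t" "\<lambda>p. p \<circ> ?t"])
       (auto simp: comp_assoc permutes_compose)
  also have "\<dots> = - det_on S M"
    unfolding det_on_def by (simp add: sum_negf)
  finally show ?thesis by simp
qed

lemma det_on_add_multiple_row:
  assumes "finite S" "i0 \<in> S" "i1 \<in> S" "i0 \<noteq> i1"
  shows "det_on S (M(i0 := (\<lambda>j. M i0 j + c * M i1 j))) = det_on S M"
  using det_on_row_add[OF assms(1,2)] det_on_row_scale[OF assms(1,2)]
    det_on_identical_rows[OF assms(1-4), of "M(i0 := M i1)"] by simp

lemma det_on_add_multiple_row_to_rows:
  assumes "finite S" "i0 \<in> S" "R \<subseteq> S - {i0}"
  shows "det_on S (\<lambda>i j. if i \<in> R then M i j + c * M i0 j else M i j) = det_on S M"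
proof -
  have "finite R" using assms finite_subset by blast
  then show ?thesis using assms(3)
  proof (induction R rule: finite_induct)
    case (insert t R)
    let ?MR = "\<lambda>i j. if i \<in> R then M i j + c * M i0 j else M i j"
    have "(\<lambda>i j. if i \<in> insert t R then M i j + c * M i0 j else M i j) =
          ?MR(t := (\<lambda>j. ?MR t j + c * ?MR i0 j))"
      using insert by (auto simp: fun_eq_iff)
    moreover have "det_on S (?MR(t := (\<lambda>j. ?MR t j + c * ?MR i0 j))) = det_on S ?MR"
      using insert assms(1,2) by (intro det_on_add_multiple_row) auto
    ultimately show ?case using insert by simp
  qed simp
qed

lemma det_on_factor_column_sums:
  assumes "finite S" "i0 \<in> S" and sums: "\<And>j. j \<in> S \<Longrightarrow> (\<Sum>i\<in>S. M i j) = c * r j"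
  shows "det_on S M = c * det_on S (M(i0 := r))"
proof -
  have "(\<Sum>i\<in>S - {i0}. det_on S (M(i0 := M i))) = 0"
  proof (intro sum.neutral ballI)
    fix i assume "i \<in> S - {i0}"
    then show "det_on S (M(i0 := M i)) = 0"
      using assms(1,2) by (intro det_on_identical_rows[of S i0 i]) auto
  qed
  then have "det_on S M = (\<Sum>i\<in>S. det_on S (M(i0 := M i)))"
    using assms(1,2) by (simp add: sum.remove)
  also have "\<dots> = det_on S (M(i0 := (\<lambda>j. \<Sum>i\<in>S. M i j)))"
    by (rule det_on_row_sum[symmetric, OF assms(1,2)])
  also have "\<dots> = det_on S (M(i0 := (\<lambda>j. c * r j)))"
    by (rule det_on_cong) (simp add: sums)
  also have "\<dots> = c * det_on S (M(i0 := r))"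
    by (rule det_on_row_scale[OF assms(1,2)])
  finally show ?thesis .
qed

lemma det_on_unit_row:
  assumes "finite S" "i0 \<in> S"
  shows "det_on S (M(i0 := (\<lambda>j. if j = i0 then 1 else 0))) = det_on (S - {i0}) M"
proof -
  have stabilizer: "{p. p permutes S \<and> p i0 = i0} = {p. p permutes S - {i0}}"
    using assms(2) by (auto intro: permutes_superset permutes_subset dest: permutes_not_in)
  have "det_on S (M(i0 := (\<lambda>j. if j = i0 then 1 else 0))) =
          (\<Sum>p \<in> {p. p permutes S \<and> p i0 = i0}. sign p * (\<Prod>i\<in>S - {i0}. M i (p i)))"
    unfolding det_on_fun_upd_row[OF assms]
    by (intro sum.mono_neutral_cong_right) (auto simp: finite_permutations assms(1))
  then show ?thesis
    unfolding stabilizer det_on_def by simp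
qed

lemma det_on_transpose:
  assumes "finite S"
  shows "det_on S (\<lambda>i j. M j i) = det_on S M"
proof -
  have "sign p * (\<Prod>i\<in>S. M (p i) i) =
          sign (inv_into UNIV p) * (\<Prod>i\<in>S. M i (inv_into UNIV p i))"
    if p: "p permutes S" for p
  proof -
    have "permutation p"
      using p assms permutation_permutes by blast
    then have "sign (inv_into UNIV p) = sign p"
      by (simp add: sign_inverse)
    moreover have "(\<Prod>i\<in>S. M (p i) i) = (\<Prod>i\<in>S. M i (inv_into UNIV p i))"
      using prod.permute[OF permutes_inv[OF p], of "\<lambda>i. M (p i) i"]
      by (simp add: comp_def permutes_inverses(1)[OF p])
    ultimately show ?thesis by simp
  qed
  then have "det_on S (\<lambda>i j. M j i) =
      (\<Sum>p | p permutes S. sign (inv_into UNIV p) * (\<Prod>i\<in>S. M i (inv_into UNIV p i)))"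
    unfolding det_on_def by (intro sum.cong) auto
  also have "\<dots> = det_on S M"
    unfolding det_on_def
    by (rule sum.reindex_bij_witness[of _ "inv_into UNIV" "inv_into UNIV"])
       (auto simp: permutes_inv permutes_inv_inv)
  finally show ?thesis .
qed

lemma det_on_pow_dvd:
  assumes "finite S" "R \<subseteq> S" and dvd: "\<And>i j. i \<in> R \<Longrightarrow> j \<in> S \<Longrightarrow> c dvd M i j"
  shows "c ^ card R dvd det_on S M"
  unfolding det_on_def
proof (intro dvd_sum dvd_mult)
  fix p assume "p \<in> {p. p permutes S}"
  then have "(\<Prod>i\<in>R. c) dvd (\<Prod>i\<in>R. M i (p i))"
    using assms(2) by (intro prod_dvd_prod dvd) (auto simp: permutes_in_image)
  then show "c ^ card R dvd (\<Prod>i\<in>S. M i (p i))"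
    using prod.subset_diff[OF assms(2,1), of "\<lambda>i. M i (p i)"] by simp
qed

lemma det_on_pow_dvd_row_differences:
  assumes "finite S" "i0 \<in> S" "R \<subseteq> S - {i0}"
    and dvd: "\<And>i j. i \<in> R \<Longrightarrow> j \<in> S \<Longrightarrow> c dvd M i j - M i0 j"
  shows "c ^ card R dvd det_on S M"
proof -
  have "c ^ card R dvd det_on S (\<lambda>i j. if i \<in> R then M i j + (-1) * M i0 j else M i j)"
    using assms(3) by (intro det_on_pow_dvd[OF assms(1)]) (auto dest: dvd)
  then show ?thesis
    by (simp only: det_on_add_multiple_row_to_rows[OF assms(1-3)])
qed

lemma det_on_ones_plus_laplacian:
  fixes L :: "'a \<Rightarrow> 'a \<Rightarrow> int"
  assumes "finite S" "i0 \<in> S"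
    and L_sym: "\<And>i j. i \<in> S \<Longrightarrow> j \<in> S \<Longrightarrow> L i j = L j i"
    and L_row_sums: "\<And>i. i \<in> S \<Longrightarrow> (\<Sum>j\<in>S. L i j) = 0"
  shows "det_on S (\<lambda>i j. 1 + L i j) = int (card S) ^ 2 * det_on (S - {i0}) L"
proof -
  let ?n = "int (card S)"
  let ?A = "(\<lambda>i j. 1 + L i j)(i0 := (\<lambda>_. 1))"
  define B where "B = (\<lambda>i j. if j = i0 then 1 else L i j)"
  have column_sums: "(\<Sum>i\<in>S. L i j) = 0" if "j \<in> S" for j
    using L_row_sums[OF that] sum.cong[OF refl, of S "\<lambda>i. L i j" "L j"] L_sym[OF _ that] by simp
  have "det_on S (\<lambda>i j. 1 + L i j) = ?n * det_on S ?A"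
    using assms(1,2) by (rule det_on_factor_column_sums) (simp add: sum.distrib column_sums)
  also have "det_on S ?A =
      det_on S (\<lambda>i j. if i \<in> S - {i0} then ?A i j + (-1) * ?A i0 j else ?A i j)"
    by (rule det_on_add_multiple_row_to_rows[symmetric]) (use assms(1,2) in auto)
  also have "\<dots> = det_on S (\<lambda>i j. B j i)"
    by (rule det_on_cong) (auto simp: B_def L_sym)
  also have "\<dots> = det_on S B"
    by (rule det_on_transpose[OF assms(1)])
  also have "\<dots> = ?n * det_on S (B(i0 := (\<lambda>j. if j = i0 then 1 else 0)))"
    using assms(1,2) by (rule det_on_factor_column_sums) (simp add: B_def column_sums)
  also have "det_on S (B(i0 := (\<lambda>j. if j = i0 then 1 else 0))) = det_on (S - {i0}) L"
    unfolding det_on_unit_row[OF assms(1,2)] by (rule det_on_cong) (simp add: B_def)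
  finally show ?thesis
    by (simp add: power2_eq_square)
qed

lemma mult_pow_dvd_square_mult_pow:
  fixes n m k :: nat
  assumes "m dvd n" "0 < k"
  shows "n * m ^ k dvd n ^ 2 * m ^ (k - 1)"
proof -
  have "n * (m * m ^ (k - 1)) dvd n * (n * m ^ (k - 1))"
    using assms(1) by (intro mult_dvd_mono) auto
  then show ?thesis
    using assms(2) by (simp add: power_eq_if[of m k] power2_eq_square)
qed

lemma power_laplacian_sym: "power_laplacian G x y = power_laplacian G y x"
  unfolding power_laplacian_def power_adj_def by auto

lemma power_laplacian_row_sum:
  assumes "finite (carrier G)" "x \<in> carrier G"
  shows "(\<Sum>y\<in>carrier G. power_laplacian G x y) = 0"
proof -
  have "power_laplacian G x y =
          (if y = x then int (power_deg G x) else 0) - (if power_adj G x y then 1 else 0)" for y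
    by (simp add: power_laplacian_def power_adj_def)
  then show ?thesis
    using assms by (simp add: sum_subtractf sum.inter_filter[symmetric] power_deg_def)
qed

context group
begin

lemma ord_dvd_ord_if_mem_generate:
  assumes "x \<in> carrier G" "y \<in> generate G {x}"
  shows "ord y dvd ord x"
proof -
  obtain k :: int where k: "y = x [^] k"
    using assms generate_pow by auto
  have "y \<in> carrier G"
    using assms generate_incl[of "{x}"] by blast
  moreover have "y [^] ord x = \<one>"
    using assms(1) by (simp add: k int_pow_int[symmetric] int_pow_pow int_pow_eq_id)
  ultimately show ?thesis
    by (simp add: pow_eq_id)
qed

lemma generate_eq_if_ord_eq:
  assumes "finite (carrier G)" "x \<in> carrier G" "y \<in> generate G {x}" "ord y = ord x"
  shows "generate G {y} = generate G {x}"
proof (rule card_subset_eq)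
  show "finite (generate G {x})"
    using assms(1,2) generate_incl finite_subset by (metis empty_subsetI insert_subset)
  show "generate G {y} \<subseteq> generate G {x}"
    using assms(2,3) generate_subgroup_incl[OF _ generate_is_subgroup, of "{y}" "{x}"] by auto
  then have "y \<in> carrier G"
    using assms(2,3) generate_incl by blast
  then have "card (generate G {y}) = ord y"
    by (rule generate_pow_card[symmetric])
  also have "\<dots> = card (generate G {x})"
    using assms(4) generate_pow_card[OF assms(2)] by (rule trans)
  finally show "card (generate G {y}) = card (generate G {x})" .
qed

lemma generate_eq_if_max_order:
  assumes "finite (carrier G)" "x \<in> carrier G" "y \<in> carrier G" "ord x \<in> max_orders G"
    and "generate G {x} \<subseteq> generate G {y}"
  shows "generate G {y} = generate G {x}"
proof -
  have "x \<in> generate G {x}"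
    by (rule generate.incl) simp
  then have "x \<in> generate G {y}"
    using assms(5) by blast
  moreover from this have "ord x dvd ord y"
    by (rule ord_dvd_ord_if_mem_generate[OF assms(3)])
  then have "ord y = ord x"
    using assms(3,4) unfolding max_orders_def by blast
  ultimately show ?thesis
    using generate_eq_if_ord_eq[OF assms(1,3)] by simp
qed

lemma power_adj_iff_of_max_order:
  assumes "finite (carrier G)" "x \<in> carrier G" "y \<in> carrier G" "ord x \<in> max_orders G"
  shows "power_adj G x y \<longleftrightarrow> y \<noteq> x \<and> y \<in> generate G {x}"
proof -
  have "generate G {y} \<subseteq> generate G {x} \<longleftrightarrow> y \<in> generate G {x}"
    using assms(2) generate_subgroup_incl[OF _ generate_is_subgroup, of "{y}" "{x}"]
    by (auto intro: generate.incl)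
  then show ?thesis
    unfolding power_adj_def using generate_eq_if_max_order[OF assms] by auto
qed

lemma power_laplacian_of_max_order:
  assumes "finite (carrier G)" "x \<in> carrier G" "y \<in> carrier G" "ord x \<in> max_orders G"
  shows "power_laplacian G x y =
           int (ord x) * (if y = x then 1 else 0) - (if y \<in> generate G {x} then 1 else 0)"
proof -
  have x_gen: "x \<in> generate G {x}"
    by (rule generate.incl) simp
  have "{z \<in> carrier G. power_adj G x z} = generate G {x} - {x}"
    using power_adj_iff_of_max_order[OF assms(1,2) _ assms(4)] generate_incl[of "{x}"] assms(2)
    by auto
  then have "power_deg G x = ord x - 1"
    using x_gen generate_pow_card[OF assms(2)] unfolding power_deg_def by simp
  then show ?thesis
    using x_gen ord_ge_1[OF assms(1,2)] power_adj_iff_of_max_order[OF assms]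
    unfolding power_laplacian_def by auto
qed

lemma ord_pow_totative:
  assumes "finite (carrier G)" "g \<in> carrier G" "k \<in> totatives (ord g)"
  shows "ord (g [^] k) = ord g"
  using assms pow_ord_eq_ord_iff by (simp add: totatives_def)

lemma card_pow_totatives:
  assumes "g \<in> carrier G"
  shows "card ((\<lambda>k. g [^] k) ` totatives (ord g)) = totient (ord g)"
proof -
  have "totatives (ord g) \<subseteq> {1..ord g}"
    using totatives_subset by fastforce
  then have "inj_on (\<lambda>k. g [^] k) (totatives (ord g))"
    by (rule inj_on_subset[OF ord_inj'[OF assms]])
  then show ?thesis
    unfolding totient_def by (rule card_image)
qed

lemma max_order_pow_dvd_reduced_laplacian:
  assumes fin: "finite (carrier G)" and m: "m \<in> max_orders G"
  shows "int m ^ (totient m - 1) dvd det_on (carrier G - {\<one>}) (power_laplacian G)"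
proof (cases "m = 1")
  case False
  obtain g where g: "g \<in> carrier G" "ord g = m"
    using m unfolding max_orders_def by auto
  define S where "S = (\<lambda>k. g [^] k) ` totatives m"
  have gens: "s \<in> carrier G \<and> ord s = m \<and> generate G {s} = generate G {g}"
    if s_S: "s \<in> S" for s
  proof -
    obtain k where k: "k \<in> totatives m" "s = g [^] k"
      using s_S unfolding S_def by blast
    have "s \<in> generate G {g}"
      using k generate_pow_on_finite_carrier[OF fin g(1)] by auto
    then show ?thesis
      using k g ord_pow_totative[OF fin g(1)] generate_eq_if_ord_eq[OF fin g(1)] by simp
  qed
  have "1 \<in> totatives m"
    using g ord_ge_1[OF fin] by (auto simp: totatives_def)
  then have g_S: "g \<in> S"
    using g(1) unfolding S_def by (metis image_eqI nat_pow_eone)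
  have one_S: "\<one> \<notin> S"
    using gens False by fastforce
  have rows: "int m dvd power_laplacian G s j - power_laplacian G g j"
    if "s \<in> S" "j \<in> carrier G" for s j
  proof -
    have "power_laplacian G s j - power_laplacian G g j =
            int m * ((if j = s then 1 else 0) - (if j = g then 1 else 0))"
      using gens[OF that(1)] gens[OF g_S] m that(2)
        power_laplacian_of_max_order[OF fin _ that(2), of s]
        power_laplacian_of_max_order[OF fin _ that(2), of g]
      by (simp add: algebra_simps)
    then show ?thesis by simp
  qed
  have "int m ^ card (S - {g}) dvd det_on (carrier G - {\<one>}) (power_laplacian G)"
    using fin g(1) gens one_S rows False g(2)
    by (intro det_on_pow_dvd_row_differences[of _ g]) auto
  moreover have "card (S - {g}) = totient m - 1"
    using g_S card_pow_totatives[OF g(1)] by (simp add: S_def g(2))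
  ultimately show ?thesis by simp
qed simp

end

theorem theorem3p7:
  fixes G :: "('a, 'b) monoid_scheme" and m :: nat
  assumes "group G" and "finite (carrier G)" and "m \<in> max_orders G"
  shows "int (order G * m ^ totient m) dvd
           det_on (carrier G) (\<lambda>x y. 1 + power_laplacian G x y)"
proof -
  interpret group G by (rule assms(1))
  let ?n = "order G"
  have det: "det_on (carrier G) (\<lambda>x y. 1 + power_laplacian G x y) =
               int ?n ^ 2 * det_on (carrier G - {\<one>\<^bsub>G\<^esub>}) (power_laplacian G)"
    unfolding order_def
    by (rule det_on_ones_plus_laplacian)
       (simp_all add: assms(2) power_laplacian_sym power_laplacian_row_sum)
  obtain x where x: "x \<in> carrier G" "ord x = m"
    using assms(3) unfolding max_orders_def by auto
  have "m dvd ?n" "0 < totient m"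
    using ord_dvd_group_order[OF x(1)] ord_ge_1[OF assms(2) x(1)] x(2) by auto
  then have "int (?n * m ^ totient m) dvd int ?n ^ 2 * int m ^ (totient m - 1)"
    by (metis mult_pow_dvd_square_mult_pow of_nat_dvd_iff of_nat_mult of_nat_power)
  also have "\<dots> dvd int ?n ^ 2 * det_on (carrier G - {\<one>\<^bsub>G\<^esub>}) (power_laplacian G)"
    using max_order_pow_dvd_reduced_laplacian[OF assms(2,3)] by (rule mult_dvd_mono[OF dvd_refl])
  finally show ?thesis
    unfolding det .
qed

end
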